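(* Let $b,n\ge1$ and $1\le c\le b$ be integers and let $p_1,\dots,p_b\ge 0$ satisfy $p_1=\dots=p_c>p_{c+1}\ge\dots\ge p_b$. If $0\le k\le n(b-1)$ is such that $|\mathrm{LDS}_{\le k}|\le c^n$, then $\Pr(\mathrm{DBS}(c))\ge\Pr(\mathrm{LDS}_{\le k})$.
   Context: Search-tree model: a complete $b$-ary tree of depth $n$ whose leaves are identified with sequences $(j_1,\dots,j_n)\in\{1,\dots,b\}^n$. Given reals $p_1,\dots,p_b\ge0$, the success probability of a leaf is $\prod_{i=1}^n p_{j_i}$, and for a set $S$ of leaves, $\Pr(S)=\sum_{(j_1,\dots,j_n)\in S}\prod_{i=1}^n p_{j_i}$; $|S|$ is the number of leaves in $S$. For $1\le c\le b$, $\mathrm{DBS}(c)=\{1,\dots,c\}^n$. The discrepancy of a leaf $(j_1,\dots,j_n)$ is $\sum_{i=1}^n (j_i-1)$, and $\mathrm{LDS}_{\le k}$ is the set of leaves of discrepancy at most $k$. *)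

theory Defs
  imports "HOL-Library.FuncSet" Complex_Main
begin

text \<open>Leaves of the complete b-ary tree of depth n: sequences (j_1,...,j_n) with
  entries in {1..b}, represented as extensional functions on positions {1..n}.\<close>
definition leaves :: "nat \<Rightarrow> nat \<Rightarrow> (nat \<Rightarrow> nat) set" where
  "leaves b n = ({1..n} \<rightarrow>\<^sub>E {1..b})"

definition leaf_prob :: "(nat \<Rightarrow> real) \<Rightarrow> nat \<Rightarrow> (nat \<Rightarrow> nat) \<Rightarrow> real" where
  "leaf_prob p n j = (\<Prod>i\<in>{1..n}. p (j i))"

definition Pr :: "(nat \<Rightarrow> real) \<Rightarrow> nat \<Rightarrow> (nat \<Rightarrow> nat) set \<Rightarrow> real" where
  "Pr p n S = (\<Sum>j\<in>S. leaf_prob p n j)"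

definition DBS :: "nat \<Rightarrow> nat \<Rightarrow> (nat \<Rightarrow> nat) set" where
  "DBS c n = ({1..n} \<rightarrow>\<^sub>E {1..c})"

definition discrepancy :: "nat \<Rightarrow> (nat \<Rightarrow> nat) \<Rightarrow> nat" where
  "discrepancy n j = (\<Sum>i\<in>{1..n}. j i - 1)"

definition LDS_le :: "nat \<Rightarrow> nat \<Rightarrow> nat \<Rightarrow> (nat \<Rightarrow> nat) set" where
  "LDS_le b n k = {j \<in> leaves b n. discrepancy n j \<le> k}"

end

theory Submission
  imports Defs
begin

text \<open>Every success probability is at most p_1, so each leaf has probability at most p_1^n,
  and every leaf of DBS(c) attains this bound. Hence any set of at most c^n = |DBS(c)| leaves,
  in particular LDS, has probability at most that of DBS(c).\<close>

lemma card_DBS: "card (DBS c n) = c ^ n"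
  unfolding DBS_def by (simp add: card_PiE)

lemma nonincreasing_le_first:
  fixes p :: "nat \<Rightarrow> 'a::preorder"
  assumes "\<And>i. a \<le> i \<Longrightarrow> i < b \<Longrightarrow> p (i + 1) \<le> p i" and "a \<le> i" and "i \<le> b"
  shows "p i \<le> p a"
  using assms(2,3)
proof (induction i rule: dec_induct)
  case base
  then show ?case by simp
next
  case (step i)
  then show ?case using assms(1)[of i] order_trans by simp
qed

lemma leaf_prob_le_pow:
  fixes M :: real
  assumes "\<And>i. i \<in> {1..n} \<Longrightarrow> 0 \<le> p (j i) \<and> p (j i) \<le> M"
  shows "leaf_prob p n j \<le> M ^ n"
proof -
  have "leaf_prob p n j \<le> (\<Prod>i\<in>{1..n}. M)"
    unfolding leaf_prob_def using assms by (intro prod_mono) blast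
  then show ?thesis by simp
qed

lemma leaf_prob_const:
  assumes "\<And>i. i \<in> {1..n} \<Longrightarrow> p (j i) = a"
  shows "leaf_prob p n j = a ^ n"
  unfolding leaf_prob_def using assms by simp

lemma Pr_le_card_mult_pow:
  fixes M :: real
  assumes "\<And>j i. j \<in> S \<Longrightarrow> i \<in> {1..n} \<Longrightarrow> 0 \<le> p (j i) \<and> p (j i) \<le> M"
  shows "Pr p n S \<le> card S * M ^ n"
  unfolding Pr_def using assms by (intro sum_bounded_above leaf_prob_le_pow) blast

lemma Pr_DBS:
  assumes "\<And>i. i \<in> {1..c} \<Longrightarrow> p i = p 1"
  shows "Pr p n (DBS c n) = real (c ^ n) * p 1 ^ n"
proof -
  have "Pr p n (DBS c n) = (\<Sum>j\<in>DBS c n. p 1 ^ n)"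
    unfolding Pr_def using assms
    by (intro sum.cong refl leaf_prob_const) (auto simp: DBS_def PiE_iff)
  then show ?thesis by (simp add: card_DBS)
qed

theorem mainTheorem3:
  fixes b n c k :: nat and p :: "nat \<Rightarrow> real"
  assumes "b \<ge> 1" and "n \<ge> 1" and "1 \<le> c" and "c \<le> b"
    and "\<And>i. 1 \<le> i \<Longrightarrow> i \<le> b \<Longrightarrow> p i \<ge> 0"
    and "\<And>i. 1 \<le> i \<Longrightarrow> i \<le> c \<Longrightarrow> p i = p 1"
    and "c < b \<Longrightarrow> p c > p (c + 1)"
    and "\<And>i. c + 1 \<le> i \<Longrightarrow> i < b \<Longrightarrow> p i \<ge> p (i + 1)"
    and "k \<le> n * (b - 1)"
    and "card (LDS_le b n k) \<le> c ^ n"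
  shows "Pr p n (DBS c n) \<ge> Pr p n (LDS_le b n k)"
proof -
  have "p (i + 1) \<le> p i" if "1 \<le> i" "i < b" for i
    using that assms(3,7) assms(6,8)[of i] assms(6)[of "i + 1"]
    by (cases "i < c"; cases "i = c") auto
  then have le_p1: "p i \<le> p 1" if "1 \<le> i" "i \<le> b" for i
    using that by (rule nonincreasing_le_first)
  have "Pr p n (LDS_le b n k) \<le> card (LDS_le b n k) * p 1 ^ n"
    using assms(5) le_p1 by (intro Pr_le_card_mult_pow) (auto simp: LDS_le_def leaves_def PiE_iff)
  also have "\<dots> \<le> c ^ n * p 1 ^ n"
    using assms(1,5,10) by (intro mult_right_mono) auto
  also have "\<dots> = Pr p n (DBS c n)"
    by (rule Pr_DBS[symmetric], rule assms(6)) auto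
  finally show ?thesis .
qed

end
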